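(* Let $n\ge 1$, let $X\in\mathbb{R}^{n\times n}$ be a symmetric positive definite matrix, let $\Delta T>0$, and for each $i\in\{1,\dots,n\}$ let $\underline{v}_i\le \bar{v}_i$ be real numbers. Consider the closed-loop discrete-time voltage dynamics $$\mathbf{v}(t+1)=\mathbf{v}(t)+\Delta T\, X\,\mathbf{u}(t),\qquad u_i(t)=-g_i(v_i(t)),\quad i=1,\dots,n,\; t=0,1,2,\dots,$$ where each $g_i:\mathbb{R}\to\mathbb{R}$ is continuously differentiable and satisfies $g_i(v_i)=0$ for all $v_i\in[\underline{v}_i,\bar{v}_i]$. Let $\frac{\partial \mathbf{u}}{\partial \mathbf{v}}=-\mathrm{diag}\big(g_1'(v_1),\dots,g_n'(v_n)\big)$. Suppose that, for $v_i$ in $(-\infty,\underline{v}_i]$ and in $[\bar{v}_i,\infty)$ (for each $i$), the derivatives satisfy the matrix inequality $$-\frac{2}{\Delta T}X^{-1}\prec \frac{\partial \mathbf{u}}{\partial \mathbf{v}}\prec 0,$$ and that $\lim_{|v_i|\to\infty}|g_i(v_i)|=\infty$ for every $i$. Then the closed-loop system is voltage stable: for every initial condition $\mathbf{v}(0)\in\mathbb{R}^n$ (and every uncontrollable component $\mathbf{v}^{env}$ of the voltage), $\lim_{t\to\infty}\mathrm{dist}(\mathbf{v}(t),S_v)=0$, where $S_v=\{\mathbf{v}\in\mathbb{R}^n:\underline{v}_i\le v_i\le \bar{v}_i\ \forall i\}$ and $\mathrm{dist}(\mathbf{v},S_v)=\min_{\mathbf{v}'\in S_v}\|\mathbf{v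}-\mathbf{v}'\|$.
   Context: This models voltage control in a (single-phase or three-phase) radial distribution network under the linearized branch flow model $\mathbf{v}=X\mathbf{q}+\mathbf{v}^{env}$, where $\mathbf{v}$ is the vector of squared voltage magnitudes, $\mathbf{q}$ the reactive power injections, $X$ the (positive definite) reactance-based sensitivity matrix, and $\mathbf{v}^{env}$ the uncontrollable part determined by active power injections and the substation voltage. The control $u_i$ is the change of reactive power injection at bus $i$ per step, $q_i(t+1)=q_i(t)+u_i(t)$, computed in a decentralized way from the local voltage $v_i$ only; $\Delta T$ is the sampling time (zero-order hold discretization of $\dot{\mathbf{v}}=X\mathbf{u}$). For symmetric matrices, $A\prec B$ means $B-A$ is positive definite. *)

theory Defs
  imports "HOL-Analysis.Analysis"
begin

definition pos_def_mat :: "real^'n^'n \<Rightarrow> bool" where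
  "pos_def_mat M \<longleftrightarrow> transpose M = M \<and> (\<forall>x. x \<noteq> 0 \<longrightarrow> x \<bullet> (M *v x) > 0)"

definition loewner_less :: "real^'n^'n \<Rightarrow> real^'n^'n \<Rightarrow> bool" where
  "loewner_less A B \<longleftrightarrow> pos_def_mat (B - A)"

definition diag_mat :: "('n::finite \<Rightarrow> real) \<Rightarrow> real^'n^'n" where
  "diag_mat d = (\<chi> i j. if i = j then d i else 0)"

end

theory Submission
  imports Defs
begin

text \<open>
  The potential \<open>V w = (\<Sum>i. G\<^sub>i (w $ i))\<close>, where \<open>G\<^sub>i\<close> is the antiderivative of
  \<open>g\<^sub>i\<close> vanishing at \<open>lo i\<close>, is a Lyapunov function of the closed loop. Outside the
  deadband one control step moves \<open>w\<close> by \<open>d = - dT X \<gamma>\<close> with \<open>\<gamma> = g(w) \<noteq> 0\<close>; along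
  this step \<open>V\<close> starts with slope \<open>\<gamma> \<bullet> d = - dT q\<close>, \<open>q = \<gamma> \<bullet> X \<gamma> > 0\<close>, while the
  left matrix inequality caps its curvature by \<open>(2/dT) d \<bullet> X\<^sup>-\<^sup>1 d = 2 dT q\<close>, so the
  second-order Taylor estimate gives a strict decrease. (The right inequality makes each
  \<open>g\<^sub>i\<close> increasing off its band, which gives \<open>\<gamma> \<noteq> 0\<close> and \<open>V \<ge> 0\<close>.) Since
  \<open>|g\<^sub>i| \<rightarrow> \<infinity>\<close>, the sublevel sets of \<open>V\<close> are bounded, and a LaSalle-type compactness
  argument forces the orbit towards the deadband.
\<close>

lemma diag_mat_mult_vec: "(diag_mat d *v x) $ i = d i * x $ i"
proof -
  have "(diag_mat d *v x) $ i = (\<Sum>j\<in>UNIV. (if i = j then d i else 0) * x $ j)"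
    by (simp add: diag_mat_def matrix_vector_mult_def)
  also have "\<dots> = (\<Sum>j\<in>UNIV. if i = j then d i * x $ j else 0)"
    by (rule sum.cong) auto
  finally show ?thesis by simp
qed

lemma inner_diag_mat_mult: "x \<bullet> (diag_mat d *v x) = (\<Sum>i\<in>UNIV. d i * (x $ i)\<^sup>2)"
  by (simp add: inner_vec_def diag_mat_mult_vec power2_eq_square mult_ac)

lemma matrix_vector_mult_uminus_left [simp]:
  fixes A :: "'a::ring_1^'n^'m"
  shows "(- A) *v x = - (A *v x)"
  using matrix_vector_mult_diff_rdistrib[of 0 A x] by simp

lemma matrix_vector_mult_uminus_right [simp]:
  fixes A :: "'a::ring_1^'n^'m"
  shows "A *v (- x) = - (A *v x)"
  using matrix_vector_mult_diff_distrib[of A 0 x] by simp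

lemma loewner_less_quadratic_form:
  assumes "loewner_less A B" and "x \<noteq> 0"
  shows "x \<bullet> (A *v x) < x \<bullet> (B *v x)"
  using assms unfolding loewner_less_def pos_def_mat_def
  by (simp add: matrix_vector_mult_diff_rdistrib inner_diff_right)

lemma pos_def_mat_invertible:
  assumes "pos_def_mat A"
  shows "invertible A"
proof -
  have "A *v x = 0 \<Longrightarrow> x = 0" for x
    using assms unfolding pos_def_mat_def by (metis inner_zero_right less_irrefl)
  then show ?thesis
    unfolding invertible_left_inverse matrix_left_invertible_ker by blast
qed

lemma matrix_inv_left:
  fixes A :: "'a::field^'n^'n"
  assumes "invertible A"
  shows "matrix_inv A ** A = mat 1"
  using assms unfolding invertible_def matrix_inv_def by (metis (mono_tags, lifting) someI_ex)

lemma strictly_below_tangent_if_second_deriv_neg: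
  fixes f f' f'' :: "real \<Rightarrow> real"
  assumes f: "\<And>s. (f has_real_derivative f' s) (at s)"
    and f': "\<And>s. (f' has_real_derivative f'' s) (at s)"
    and f''_cont: "continuous_on UNIV f''"
    and B: "finite B" and f''_neg: "\<And>s. s \<notin> B \<Longrightarrow> f'' s < 0"
    and "a < b"
  shows "f b < f a + f' a * (b - a)"
proof -
  have f''_nonpos: "f'' s \<le> 0" for s
  proof (rule ccontr)
    assume "\<not> f'' s \<le> 0"
    moreover have "open {x. 0 < f'' x}"
      by (rule open_Collect_less[OF continuous_on_const f''_cont])
    ultimately have "\<exists>y\<in>{x. 0 < f'' x}. y \<notin> B"
      by (intro open_minus_countable countable_finite B) (auto simp: not_le)
    then obtain y where "0 < f'' y" "y \<notin> B" by blast
    with f''_neg[of y] show False by linarith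
  qed
  have f'_less: "f' t < f' s" if "s < t" for s t
  proof -
    obtain y where y: "s < y" "y < t" "y \<notin> B"
      using open_minus_countable[OF countable_finite[OF B], of "{s<..<t}"] \<open>s < t\<close> by auto
    obtain d where "d > 0" and d: "\<forall>h>0. h < d \<longrightarrow> f' y < f' (y - h)"
      using DERIV_neg_dec_left[OF f' f''_neg[OF y(3)]] by blast
    define h where "h = min (d / 2) (y - s)"
    have h: "0 < h" "h < d" "s \<le> y - h"
      using \<open>d > 0\<close> y by (auto simp: h_def)
    have "f' t \<le> f' y"
      using deriv_nonpos_imp_antimono[of y t f' f''] f' f''_nonpos y by auto
    also have "\<dots> < f' (y - h)"
      using d h by blast
    also have "\<dots> \<le> f' s"
      using deriv_nonpos_imp_antimono[of s "y - h" f' f''] f' f''_nonpos h by auto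
    finally show ?thesis .
  qed
  obtain \<xi> where "a < \<xi>" "\<xi> < b" "f b - f a = (b - a) * f' \<xi>"
    using MVT2[of a b f f'] f \<open>a < b\<close> by blast
  moreover have "(b - a) * f' \<xi> < (b - a) * f' a"
    using f'_less[OF \<open>a < \<xi>\<close>] \<open>a < b\<close> by simp
  ultimately show ?thesis by (simp add: algebra_simps)
qed

lemma continuous_has_antiderivative:
  fixes g :: "real \<Rightarrow> real"
  assumes "continuous_on UNIV g"
  shows "\<exists>G. \<forall>x. (G has_real_derivative g x) (at x)"
proof -
  have "\<exists>G. \<forall>x::real. -\<infinity> < x \<longrightarrow> x < \<infinity> \<longrightarrow> (G has_vector_derivative g x) (at x)"
    by (rule einterval_antiderivative) (use assms in \<open>auto simp: continuous_on_eq_continuous_at\<close>)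
  then show ?thesis by (auto simp: has_real_derivative_iff_has_vector_derivative)
qed

lemma antiderivative_min_at_sign_change:
  fixes G g :: "real \<Rightarrow> real"
  assumes G: "\<And>x. (G has_real_derivative g x) (at x)"
    and nonpos: "\<And>x. x \<le> c \<Longrightarrow> g x \<le> 0" and nonneg: "\<And>x. c \<le> x \<Longrightarrow> 0 \<le> g x"
  shows "G c \<le> G x"
  using deriv_nonneg_imp_mono[of c x G g] deriv_nonpos_imp_antimono[of x c G g] G nonpos nonneg
  by (cases "c \<le> x") auto

lemma antiderivative_filterlim_at_infinity:
  fixes G g :: "real \<Rightarrow> real"
  assumes G: "\<And>x. (G has_real_derivative g x) (at x)"
    and nonpos: "\<And>x. x \<le> c \<Longrightarrow> g x \<le> 0" and nonneg: "\<And>x. c \<le> x \<Longrightarrow> 0 \<le> g x"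
    and g_infty: "filterlim (\<lambda>x. \<bar>g x\<bar>) at_top at_infinity"
  shows "filterlim G at_top at_infinity"
proof -
  obtain b where b: "\<And>x. b \<le> \<bar>x\<bar> \<Longrightarrow> 1 \<le> \<bar>g x\<bar>"
    using g_infty unfolding filterlim_at_top eventually_at_infinity real_norm_def by blast
  define R where "R = max b \<bar>c\<bar>"
  have R: "b \<le> R" "\<bar>c\<bar> \<le> R"
    by (simp_all add: R_def)
  have G_min: "G c \<le> G x" for x
    by (rule antiderivative_min_at_sign_change[OF G nonpos nonneg])
  have right: "G c + x - R \<le> G x" if "R \<le> x" for x
  proof -
    have "G R - R \<le> G x - x"
    proof (rule deriv_nonneg_imp_mono[of R x "\<lambda>y. G y - y" "\<lambda>y. g y - 1"])
      show "((\<lambda>y. G y - y) has_real_derivative g y - 1) (at y)" for y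
        by (auto intro!: derivative_eq_intros G)
      show "0 \<le> g y - 1" if "y \<in> {R..x}" for y
        using b[of y] nonneg[of y] that R by auto
    qed (use that in auto)
    with G_min[of R] show ?thesis by linarith
  qed
  have left: "G c - x - R \<le> G x" if "x \<le> - R" for x
  proof -
    have "G (- R) + (- R) \<le> G x + x"
    proof (rule deriv_nonpos_imp_antimono[of x "- R" "\<lambda>y. G y + y" "\<lambda>y. g y + 1"])
      show "((\<lambda>y. G y + y) has_real_derivative g y + 1) (at y)" for y
        by (auto intro!: derivative_eq_intros G)
      show "g y + 1 \<le> 0" if "y \<in> {x..- R}" for y
        using b[of y] nonpos[of y] that R by auto
    qed (use that in auto)
    with G_min[of "- R"] show ?thesis by linarith
  qed
  show ?thesis
    unfolding filterlim_at_top eventually_at_infinity real_norm_def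
  proof
    fix Z
    show "\<exists>b. \<forall>x. b \<le> \<bar>x\<bar> \<longrightarrow> Z \<le> G x"
    proof (intro exI allI impI)
      fix x assume "max R (Z - G c + R) \<le> \<bar>x\<bar>"
      with right[of x] left[of x] show "Z \<le> G x" by (cases "0 \<le> x") auto
    qed
  qed
qed

lemma infdist_tendsto_0_if_strict_lyapunov:
  fixes h :: "'a::heine_borel \<Rightarrow> 'a" and V :: "'a \<Rightarrow> real" and v :: "nat \<Rightarrow> 'a"
  assumes h_cont: "continuous_on UNIV h" and V_cont: "continuous_on UNIV V"
    and sublevel_bounded: "\<And>c. bounded {w. V w \<le> c}"
    and V_nonincr: "\<And>w. V (h w) \<le> V w"
    and V_decr: "\<And>w. w \<notin> S \<Longrightarrow> V (h w) < V w"
    and orbit: "\<And>t. v (Suc t) = h (v t)"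
  shows "((\<lambda>t. infdist (v t) S) \<longlongrightarrow> 0) sequentially"
proof -
  define K0 where "K0 = {w. V w \<le> V (v 0)}"
  have K0_compact: "compact K0"
    unfolding K0_def compact_eq_bounded_closed
    by (intro conjI sublevel_bounded closed_Collect_le V_cont continuous_on_const)
  have V_orbit_decseq: "decseq (\<lambda>t. V (v t))"
    using V_nonincr orbit by (simp add: decseq_SucI)
  then have orbit_K0: "v t \<in> K0" for t
    by (simp add: K0_def decseq_def)
  obtain wmin where "\<And>w. w \<in> K0 \<Longrightarrow> V wmin \<le> V w"
    using continuous_attains_inf[OF K0_compact _ continuous_on_subset[OF V_cont]] orbit_K0 by blast
  then obtain L where "(\<lambda>t. V (v t)) \<longlonglongrightarrow> L"
    using decseq_convergent[OF V_orbit_decseq] orbit_K0 by metis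
  then have decrement: "(\<lambda>t. V (v t) - V (h (v t))) \<longlonglongrightarrow> 0"
    using tendsto_diff[OF _ LIMSEQ_Suc] orbit by fastforce
  show ?thesis
  proof (rule order_tendstoI)
    show "\<forall>\<^sub>F t in sequentially. a < infdist (v t) S" if "a < 0" for a
      using that infdist_nonneg less_le_trans by (intro always_eventually allI) blast
  next
    fix e :: real assume "e > 0"
    define K where "K = K0 \<inter> {w. e \<le> infdist w S}"
    have K_compact: "compact K"
      unfolding K_def
      by (intro compact_Int_closed K0_compact
          closed_Collect_le[OF continuous_on_const continuous_on_infdist[OF continuous_on_id]])
    \<comment> \<open>On the compact set \<open>K\<close> the one-step decrease of \<open>V\<close> has a positive minimum,
      whereas along the orbit it tends to \<open>0\<close>.\<close>
    have "\<forall>\<^sub>F t in sequentially. v t \<notin> K"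
    proof (cases "K = {}")
      case False
      have "continuous_on K (\<lambda>w. V w - V (h w))"
        by (rule continuous_on_subset[OF continuous_on_diff[OF V_cont
              continuous_on_compose2[OF V_cont h_cont subset_UNIV]] subset_UNIV])
      then obtain w0 where "w0 \<in> K" and w0: "\<And>w. w \<in> K \<Longrightarrow> V w0 - V (h w0) \<le> V w - V (h w)"
        using continuous_attains_inf[OF K_compact False] by blast
      then have "w0 \<notin> S"
        using \<open>e > 0\<close> by (auto simp: K_def)
      then have "0 < V w0 - V (h w0)"
        using V_decr by simp
      from order_tendstoD(2)[OF decrement this] show ?thesis
        by eventually_elim (use w0 orbit in fastforce)
    qed simp
    then show "\<forall>\<^sub>F t in sequentially. infdist (v t) S < e"
      by eventually_elim (use orbit_K0 in \<open>auto simp: K_def\<close>)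
  qed
qed

locale voltage_control =
  fixes X :: "real^'n^'n"
    and dT :: real
    and lo hi :: "'n \<Rightarrow> real"
    and g g' :: "'n \<Rightarrow> real \<Rightarrow> real"
  assumes X_pd: "pos_def_mat X"
    and dT_pos: "dT > 0"
    and lo_hi: "\<And>i. lo i \<le> hi i"
    and g_deriv: "\<And>i x. (g i has_real_derivative g' i x) (at x)"
    and g'_cont: "\<And>i. continuous_on UNIV (g' i)"
    and g_dead: "\<And>i x. lo i \<le> x \<Longrightarrow> x \<le> hi i \<Longrightarrow> g i x = 0"
    and deriv_bounds: "\<And>w. (\<forall>i. w $ i < lo i \<or> w $ i > hi i) \<Longrightarrow>
         loewner_less (- ((2 / dT) *\<^sub>R matrix_inv X)) (- diag_mat (\<lambda>i. g' i (w $ i)))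
       \<and> loewner_less (- diag_mat (\<lambda>i. g' i (w $ i))) 0"
begin

definition deadband :: "(real^'n) set" where
  "deadband = {w. \<forall>i. lo i \<le> w $ i \<and> w $ i \<le> hi i}"

definition step :: "real^'n \<Rightarrow> real^'n" where
  "step w = w + dT *\<^sub>R (X *v (\<chi> i. - g i (w $ i)))"

lemma g'_pos_off_deadband:
  assumes "x < lo i \<or> hi i < x"
  shows "0 < g' i x"
proof -
  define w :: "real^'n" where "w = (\<chi> j. if j = i then x else hi j + 1)"
  have "\<forall>j. w $ j < lo j \<or> w $ j > hi j"
    using assms by (auto simp: w_def)
  then have "loewner_less (- diag_mat (\<lambda>i. g' i (w $ i))) 0"
    using deriv_bounds by blast
  from loewner_less_quadratic_form[OF this, of "axis i 1"]
  have "0 < (\<Sum>j\<in>UNIV. g' j (w $ j) * (axis i 1 $ j)\<^sup>2)"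
    by (simp add: axis_eq_0_iff inner_diag_mat_mult)
  also have "\<dots> = (\<Sum>j\<in>UNIV. if j = i then g' i x else 0)"
    by (rule sum.cong) (auto simp: axis_def w_def)
  also have "\<dots> = g' i x"
    by simp
  finally show ?thesis .
qed

lemma g'_zero_in_deadband:
  assumes "lo i < x" "x < hi i"
  shows "g' i x = 0"
proof (rule DERIV_local_const[OF g_deriv])
  show "0 < min (x - lo i) (hi i - x)"
    using assms by simp
  show "\<forall>y. \<bar>x - y\<bar> < min (x - lo i) (hi i - x) \<longrightarrow> g i x = g i y"
    using assms g_dead by (auto simp: abs_if split: if_splits)
qed

lemma g_pos_above_deadband:
  assumes "hi i < x"
  shows "0 < g i x"
proof -
  obtain z where z: "hi i < z" "z < x" "g i x - g i (hi i) = (x - hi i) * g' i z"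
    using MVT2[of "hi i" x "g i" "g' i"] assms g_deriv by blast
  moreover have "0 < g' i z"
    using g'_pos_off_deadband z by blast
  moreover have "g i (hi i) = 0"
    using g_dead lo_hi by simp
  ultimately show ?thesis by simp
qed

lemma g_neg_below_deadband:
  assumes "x < lo i"
  shows "g i x < 0"
proof -
  obtain z where z: "x < z" "z < lo i" "g i (lo i) - g i x = (lo i - x) * g' i z"
    using MVT2[of x "lo i" "g i" "g' i"] assms g_deriv by blast
  moreover have "0 < g' i z"
    using g'_pos_off_deadband z by blast
  moreover have "g i (lo i) = 0"
    using g_dead lo_hi by simp
  ultimately show ?thesis
    by (smt (verit) mult_pos_pos)
qed

lemma g_nonneg: "lo i \<le> x \<Longrightarrow> 0 \<le> g i x"
  using g_dead g_pos_above_deadband by (metis less_le_not_le nle_le)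

lemma g_nonpos: "x \<le> lo i \<Longrightarrow> g i x \<le> 0"
  using g_dead g_neg_below_deadband lo_hi by (metis dual_order.refl order_le_less)

lemma g_continuous: "continuous_on UNIV (g i)"
  by (rule continuous_at_imp_continuous_on) (auto intro: DERIV_isCont[OF g_deriv])

lemma step_continuous: "continuous_on UNIV step"
proof -
  have "continuous_on UNIV (\<lambda>w::real^'n. \<chi> i. - g i (w $ i))"
    by (intro continuous_on_vec_lambda continuous_on_minus
        continuous_on_compose2[OF g_continuous] continuous_intros) auto
  then have "continuous_on UNIV (\<lambda>w. X *v (\<chi> i. - g i (w $ i)))"
    by (rule continuous_on_compose2[OF matrix_vector_mult_linear_continuous_on]) auto
  then show ?thesis
    unfolding step_def by (intro continuous_intros)
qed

lemma step_deadband: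
  assumes "w \<in> deadband"
  shows "step w = w"
proof -
  have "(\<chi> i. - g i (w $ i)) = 0"
    using assms g_dead by (auto simp: deadband_def vec_eq_iff)
  then show ?thesis
    by (simp add: step_def)
qed

lemma g'_quadratic_form_less:
  assumes "d \<noteq> 0"
    and off_edges: "\<And>i. d $ i \<noteq> 0 \<Longrightarrow> y $ i \<noteq> lo i \<and> y $ i \<noteq> hi i"
  shows "(\<Sum>i\<in>UNIV. g' i (y $ i) * (d $ i)\<^sup>2) < (2 / dT) * (d \<bullet> (matrix_inv X *v d))"
proof -
  \<comment> \<open>The matrix bound is only assumed where every coordinate lies off its band. Coordinates
    strictly inside the band (where \<open>g'\<close> vanishes) are moved outside, which can only increase
    the sum; on the edges \<open>g'\<close> need not vanish (for instance when \<open>lo i = hi i\<close>),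
    hence \<open>off_edges\<close>.\<close>
  define u :: "real^'n" where
    "u = (\<chi> i. if y $ i < lo i \<or> hi i < y $ i then y $ i else hi i + 1)"
  have u_off: "\<forall>i. u $ i < lo i \<or> u $ i > hi i"
    using lo_hi by (auto simp: u_def)
  have "g' i (y $ i) * (d $ i)\<^sup>2 \<le> g' i (u $ i) * (d $ i)\<^sup>2" for i
  proof (cases "d $ i = 0 \<or> y $ i < lo i \<or> hi i < y $ i")
    case False
    then have "g' i (y $ i) = 0"
      using off_edges[of i] by (intro g'_zero_in_deadband) auto
    moreover have "0 < g' i (u $ i)"
      using u_off g'_pos_off_deadband by blast
    ultimately show ?thesis by simp
  qed (auto simp: u_def)
  then have "(\<Sum>i\<in>UNIV. g' i (y $ i) * (d $ i)\<^sup>2) \<le> d \<bullet> (diag_mat (\<lambda>i. g' i (u $ i)) *v d)"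
    unfolding inner_diag_mat_mult by (rule sum_mono)
  also have "\<dots> < d \<bullet> (((2 / dT) *\<^sub>R matrix_inv X) *v d)"
    using loewner_less_quadratic_form[OF conjunct1[OF deriv_bounds[OF u_off]] \<open>d \<noteq> 0\<close>] by simp
  also have "\<dots> = (2 / dT) * (d \<bullet> (matrix_inv X *v d))"
    by (simp flip: scaleR_matrix_vector_assoc)
  finally show ?thesis .
qed

lemma exists_potential:
  obtains G where "\<And>i x. (G i has_real_derivative g i x) (at x)" and "\<And>i. G i (lo i) = 0"
proof -
  have "\<forall>i. \<exists>F. \<forall>x. (F has_real_derivative g i x) (at x)"
    using continuous_has_antiderivative[OF g_continuous] by blast
  then obtain F where F: "\<And>i x. (F i has_real_derivative g i x) (at x)"
    by metis
  show ?thesis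
    by (rule that[of "\<lambda>i x. F i x - F i (lo i)"]) (auto intro!: derivative_eq_intros F)
qed

end

locale voltage_lyapunov = voltage_control X dT lo hi g g'
  for X :: "real^'n^'n" and dT lo hi and g g' :: "'n \<Rightarrow> real \<Rightarrow> real" +
  fixes G :: "'n \<Rightarrow> real \<Rightarrow> real"
  assumes G_deriv: "\<And>i x. (G i has_real_derivative g i x) (at x)"
    and G_lo: "\<And>i. G i (lo i) = 0"
begin

definition lyapunov :: "real^'n \<Rightarrow> real" where
  "lyapunov w = (\<Sum>i\<in>UNIV. G i (w $ i))"

lemma G_nonneg: "0 \<le> G i x"
proof -
  have "G i (lo i) \<le> G i x"
    by (rule antiderivative_min_at_sign_change[OF G_deriv g_nonpos g_nonneg])
  then show ?thesis
    by (simp add: G_lo)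
qed

lemma lyapunov_continuous: "continuous_on UNIV lyapunov"
proof -
  have "continuous_on UNIV (G i)" for i
    by (rule continuous_at_imp_continuous_on) (auto intro: DERIV_isCont[OF G_deriv])
  then have "continuous_on UNIV (\<lambda>w::real^'n. G i (w $ i))" for i
    by (rule continuous_on_compose2[OF _ continuous_on_component[OF continuous_on_id]]) auto
  then show ?thesis
    unfolding lyapunov_def by (intro continuous_on_sum)
qed

lemma lyapunov_sublevel_bounded:
  assumes g_infty: "\<And>i. filterlim (\<lambda>x. \<bar>g i x\<bar>) at_top at_infinity"
  shows "bounded {w. lyapunov w \<le> c}"
proof -
  have "\<forall>\<^sub>F x in at_infinity. c + 1 \<le> G i x" for i
    using antiderivative_filterlim_at_infinity[OF G_deriv g_nonpos g_nonneg g_infty]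
    unfolding filterlim_at_top by blast
  then have "\<forall>i. \<exists>b. \<forall>x. b \<le> \<bar>x\<bar> \<longrightarrow> c + 1 \<le> G i x"
    unfolding eventually_at_infinity real_norm_def by blast
  then obtain b where b: "\<And>i x. b i \<le> \<bar>x\<bar> \<Longrightarrow> c + 1 \<le> G i x"
    by metis
  have "{w. lyapunov w \<le> c} \<subseteq> cbox (\<chi> i. - b i) (\<chi> i. b i)"
  proof
    fix w assume "w \<in> {w. lyapunov w \<le> c}"
    then have "G i (w $ i) \<le> c" for i
      using member_le_sum[of i UNIV "\<lambda>i. G i (w $ i)"] G_nonneg by (simp add: lyapunov_def)
    then have "\<bar>w $ i\<bar> \<le> b i" for i
      using b[of i "w $ i"] by (smt (verit))
    then show "w \<in> cbox (\<chi> i. - b i) (\<chi> i. b i)"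
      unfolding mem_box_cart by (simp add: abs_le_iff minus_le_iff)
  qed
  then show ?thesis
    using bounded_subset bounded_cbox by blast
qed

lemma lyapunov_second_order_bound:
  assumes "d \<noteq> 0"
  shows "lyapunov (w + d)
    < lyapunov w + (\<Sum>i\<in>UNIV. g i (w $ i) * d $ i) + (d \<bullet> (matrix_inv X *v d)) / dT"
proof -
  define c where "c = (d \<bullet> (matrix_inv X *v d)) / dT"
  define y where "y i s = w $ i + s * d $ i" for i s
  define f where "f s = (\<Sum>i\<in>UNIV. G i (y i s)) - c * s\<^sup>2" for s
  define f' where "f' s = (\<Sum>i\<in>UNIV. g i (y i s) * d $ i) - 2 * c * s" for s
  define f'' where "f'' s = (\<Sum>i\<in>UNIV. g' i (y i s) * (d $ i)\<^sup>2) - 2 * c" for s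
  define B where "B = (\<Union>i. {(lo i - w $ i) / d $ i, (hi i - w $ i) / d $ i})"
  have y: "((\<lambda>s. y i s) has_real_derivative d $ i) (at s)" for i s
    unfolding y_def by (auto intro!: derivative_eq_intros)
  have "f 1 < f 0 + f' 0 * (1 - 0)"
  proof (rule strictly_below_tangent_if_second_deriv_neg[of f f' f'' B])
    show "(f has_real_derivative f' s) (at s)" for s
      unfolding f_def f'_def
      by (auto intro!: derivative_eq_intros DERIV_chain2[OF G_deriv y])
    show "(f' has_real_derivative f'' s) (at s)" for s
      unfolding f'_def f''_def
      by (auto intro!: derivative_eq_intros DERIV_chain2[OF g_deriv y] simp: power2_eq_square mult.assoc)
    show "continuous_on UNIV f''"
      unfolding f''_def y_def
      by (intro continuous_intros continuous_on_compose2[OF g'_cont]) auto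
    show "finite B"
      by (simp add: B_def)
    show "f'' s < 0" if "s \<notin> B" for s
    proof -
      have "(w + s *\<^sub>R d) $ i \<noteq> lo i \<and> (w + s *\<^sub>R d) $ i \<noteq> hi i" if "d $ i \<noteq> 0" for i
      proof -
        have "s \<noteq> (lo i - w $ i) / d $ i" "s \<noteq> (hi i - w $ i) / d $ i"
          using \<open>s \<notin> B\<close> by (auto simp: B_def)
        with that show ?thesis
          by (auto simp: field_simps)
      qed
      from g'_quadratic_form_less[OF assms this] show ?thesis
        by (simp add: f''_def y_def c_def)
    qed
  qed simp
  then show ?thesis
    by (simp add: f_def f'_def y_def c_def lyapunov_def)
qed

lemma lyapunov_step_less:
  assumes "w \<notin> deadband"
  shows "lyapunov (step w) < lyapunov w"
proof -
  define \<gamma> where "\<gamma> = (\<chi> i. g i (w $ i))"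
  define d where "d = - dT *\<^sub>R (X *v \<gamma>)"
  have "(\<chi> i. - g i (w $ i)) = - \<gamma>"
    by (simp add: \<gamma>_def vec_eq_iff)
  then have step_w: "step w = w + d"
    by (simp add: step_def d_def)
  obtain i where "w $ i < lo i \<or> hi i < w $ i"
    using assms by (auto simp: deadband_def not_le)
  then have "\<gamma> \<noteq> 0"
    using g_pos_above_deadband g_neg_below_deadband by (force simp: \<gamma>_def vec_eq_iff)
  then have "0 < \<gamma> \<bullet> (X *v \<gamma>)"
    using X_pd by (simp add: pos_def_mat_def)
  then have "d \<noteq> 0"
    using dT_pos by (auto simp: d_def)
  have "(\<Sum>i\<in>UNIV. g i (w $ i) * d $ i) = \<gamma> \<bullet> d"
    by (simp add: \<gamma>_def inner_vec_def)
  also have "\<dots> = - dT * (\<gamma> \<bullet> (X *v \<gamma>))"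
    by (simp add: d_def)
  finally have slope: "(\<Sum>i\<in>UNIV. g i (w $ i) * d $ i) = - dT * (\<gamma> \<bullet> (X *v \<gamma>))" .
  have "matrix_inv X *v d = - dT *\<^sub>R \<gamma>"
    using matrix_inv_left[OF pos_def_mat_invertible[OF X_pd]]
    by (simp add: d_def matrix_vector_mul_assoc matrix_vector_mult_scaleR)
  then have curvature: "(d \<bullet> (matrix_inv X *v d)) / dT = dT * (\<gamma> \<bullet> (X *v \<gamma>))"
    using dT_pos by (simp add: d_def inner_commute)
  show ?thesis
    using lyapunov_second_order_bound[OF \<open>d \<noteq> 0\<close>, of w] slope curvature step_w by simp
qed

lemma lyapunov_step_le: "lyapunov (step w) \<le> lyapunov w"
  using lyapunov_step_less[of w] step_deadband[of w] by (cases "w \<in> deadband") auto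

end

theorem theorem1:
  fixes X :: "real^'n^'n"
    and dT :: real
    and lo hi :: "'n \<Rightarrow> real"
    and g g' :: "'n \<Rightarrow> real \<Rightarrow> real"
    and v :: "nat \<Rightarrow> real^'n"
  assumes X_pd: "pos_def_mat X"
    and dT_pos: "dT > 0"
    and lo_hi: "\<And>i. lo i \<le> hi i"
    and g_deriv: "\<And>i x. (g i has_real_derivative g' i x) (at x)"
    and g'_cont: "\<And>i. continuous_on UNIV (g' i)"
    and g_dead: "\<And>i x. lo i \<le> x \<Longrightarrow> x \<le> hi i \<Longrightarrow> g i x = 0"
    and deriv_bounds: "\<And>w. (\<forall>i. w $ i < lo i \<or> w $ i > hi i) \<Longrightarrow>
         loewner_less (- ((2 / dT) *\<^sub>R matrix_inv X)) (- diag_mat (\<lambda>i. g' i (w $ i)))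
       \<and> loewner_less (- diag_mat (\<lambda>i. g' i (w $ i))) 0"
    and g_infty: "\<And>i. filterlim (\<lambda>x. \<bar>g i x\<bar>) at_top at_infinity"
    and dyn: "\<And>t. v (Suc t) = v t + dT *\<^sub>R (X *v (\<chi> i. - g i (v t $ i)))"
  shows "((\<lambda>t. infdist (v t) {w. \<forall>i. lo i \<le> w $ i \<and> w $ i \<le> hi i}) \<longlongrightarrow> 0) sequentially"
proof -
  interpret voltage_control X dT lo hi g g'
    by unfold_locales (fact assms)+
  obtain G where G: "\<And>i x. (G i has_real_derivative g i x) (at x)" "\<And>i. G i (lo i) = 0"
    using exists_potential by blast
  interpret voltage_lyapunov X dT lo hi g g' G
    by unfold_locales (fact G)+
  have orbit: "v (Suc t) = step (v t)" for t
    by (simp add: dyn step_def)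
  from infdist_tendsto_0_if_strict_lyapunov[where h = step and V = lyapunov and S = deadband and v = v,
      OF step_continuous lyapunov_continuous lyapunov_sublevel_bounded[OF g_infty]
      lyapunov_step_le lyapunov_step_less orbit]
  show ?thesis
    unfolding deadband_def .
qed

end
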